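(* Let $A(l_1,l_2)\in\mathbb{C}[l_1,l_2]$ be a polynomial of degree at most $R$ in each of $l_1$ and $l_2$, and assume that $T_{l_1,l_2}A(l_1,l_2)$ has total degree at most $R$ (i.e. is a linear combination of monomials $l_1^ml_2^{m'}$ with $m+m'\le R$). Then $$\sum_{l_1=k_1}^{k_2}\sum_{l_2=k_2}^{k_3}A(l_1,l_2)-A(k_2,k_2)$$ is a polynomial in $k_1,k_2,k_3$ of degree at most $R+2$ in $k_2$. Moreover, if $T_{l_1,l_2}A(l_1,l_2)=0$, then this polynomial has degree at most $R+1$ in $k_2$.
   Context: Summation over an interval is extended to all integer endpoints: $\sum_{i=a}^b f(i)=f(a)+\cdots+f(b)$ if $a\le b$, $=0$ if $b=a-1$, and $=-f(b+1)-\cdots-f(a-1)$ if $b+1\le a-1$; with this convention sums of polynomials over intervals with polynomial endpoints are polynomials. $E_x$ denotes the shift $E_xf(x)=f(x+1)$, $E_x^{-1}$ its inverse, $\Delta_x=E_x-\operatorname{id}$, and $S_{x,y}$ the swap $S_{x,y}f(x,y)=f(y,x)$; products of operators are compositions. Define $V_{x,y}=\operatorname{id}+E_x^{-1}\Delta_x\Delta_y$ and $$T_{l_1,l_2}=(\operatorname{id}+E_{l_2}E_{l_1}^{-1}S_{l_1,l_2})\,(V_{l_1,l_2}+V_{l_2,l_1})^{-1}V_{l_1,l_2},$$ where $V_{l_1,l_2}+V_{l_2,l_1}=2\operatorname{id}+(E_{l_1}^{-1}+E_{l_2}^{-1})\Delta_{l_1}\Delta_{l_2}$ is invertible on $\mathbb{C}[l_1,l_2]$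 (its inverse is the finite-on-each-polynomial series $\tfrac12\sum_{j\ge0}(-\tfrac12)^j((E_{l_1}^{-1}+E_{l_2}^{-1})\Delta_{l_1}\Delta_{l_2})^j$). *)

theory Defs
  imports Complex_Main
begin

text \<open>Bivariate polynomials over the complex numbers are represented as
  polynomial functions of type complex \<Rightarrow> complex \<Rightarrow> complex.\<close>

type_synonym fun2 = "complex \<Rightarrow> complex \<Rightarrow> complex"

definition poly2 :: "fun2 \<Rightarrow> bool" where
  "poly2 f \<longleftrightarrow> (\<exists>n c. f = (\<lambda>x y. \<Sum>i\<le>n. \<Sum>j\<le>n. c i j * x ^ i * y ^ j))"

definition deg_each_le :: "fun2 \<Rightarrow> nat \<Rightarrow> bool" where
  "deg_each_le f R \<longleftrightarrow> (\<exists>c. f = (\<lambda>x y. \<Sum>i\<le>R. \<Sum>j\<le>R. c i j * x ^ i * y ^ j))"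

definition total_deg_le :: "fun2 \<Rightarrow> nat \<Rightarrow> bool" where
  "total_deg_le f R \<longleftrightarrow>
     (\<exists>c. f = (\<lambda>x y. \<Sum>(i,j)\<in>{(i,j). i + j \<le> R}. c i j * x ^ i * y ^ j))"

definition E1 :: "fun2 \<Rightarrow> fun2" where "E1 f = (\<lambda>x y. f (x + 1) y)"
definition E2 :: "fun2 \<Rightarrow> fun2" where "E2 f = (\<lambda>x y. f x (y + 1))"
definition E1inv :: "fun2 \<Rightarrow> fun2" where "E1inv f = (\<lambda>x y. f (x - 1) y)"
definition E2inv :: "fun2 \<Rightarrow> fun2" where "E2inv f = (\<lambda>x y. f x (y - 1))"
definition D1 :: "fun2 \<Rightarrow> fun2" where "D1 f = (\<lambda>x y. E1 f x y - f x y)"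
definition D2 :: "fun2 \<Rightarrow> fun2" where "D2 f = (\<lambda>x y. E2 f x y - f x y)"
definition Swap :: "fun2 \<Rightarrow> fun2" where "Swap f = (\<lambda>x y. f y x)"

definition V12 :: "fun2 \<Rightarrow> fun2" where
  "V12 f = (\<lambda>x y. f x y + E1inv (D1 (D2 f)) x y)"
definition V21 :: "fun2 \<Rightarrow> fun2" where
  "V21 f = (\<lambda>x y. f x y + E2inv (D2 (D1 f)) x y)"

definition Vsum_inv :: "fun2 \<Rightarrow> fun2" where
  "Vsum_inv h = (THE g. poly2 g \<and> (\<lambda>x y. V12 g x y + V21 g x y) = h)"

definition Top :: "fun2 \<Rightarrow> fun2" where
  "Top A = (let g = Vsum_inv (V12 A) in (\<lambda>x y. g x y + E2 (E1inv (Swap g)) x y))"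

text \<open>Sum over an interval with arbitrary integer endpoints (paper's convention).\<close>
definition isum :: "(int \<Rightarrow> complex) \<Rightarrow> int \<Rightarrow> int \<Rightarrow> complex" where
  "isum f a b = (if a \<le> b then (\<Sum>i=a..b. f i) else - (\<Sum>i=b+1..a-1. f i))"

definition poly3_deg2_le :: "(int \<Rightarrow> int \<Rightarrow> int \<Rightarrow> complex) \<Rightarrow> nat \<Rightarrow> bool" where
  "poly3_deg2_le P d \<longleftrightarrow> (\<exists>n c. \<forall>k1 k2 k3.
      P k1 k2 k3 = (\<Sum>a\<le>n. \<Sum>b\<le>d. \<Sum>e\<le>n.
         c a b e * of_int k1 ^ a * of_int k2 ^ b * of_int k3 ^ e))"

end

theory Submission
  imports Defs
begin

text \<open>
  Take \<Phi> of degree at most R + 1 in each variable with D1 (D2 \<Phi>) = A. Telescoping both sums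
  turns the expression into \<Phi>(k2+1,k3+1) - \<Phi>(k1,k3+1) + \<Phi>(k1,k2) - u(k2+1,k2) with u = V12 \<Phi>,
  so only the restriction of u to the subdiagonal can have degree above R + 1 in k2.
  Write u = (V12 + V21) \<psi> and w = \<psi> + \<sigma> \<psi>, where \<sigma> f (x,y) = f (y+1,x-1). Since D1 D2 commutes
  with V12 and V21, the polynomial preimage of V12 A under V12 + V21 is D1 (D2 \<psi>), hence
  Top A = D1 (D2 w); and evaluating (V12 + V21) w = u + \<sigma> u on the subdiagonal, where \<sigma> acts
  trivially, yields u(k+1,k) = w(k+1,k) + (Top A (k,k) + Top A (k+1,k-1)) / 2.
  Finally w differs from an anti-difference of Top A of total degree R + 2 (which may be taken
  to be 0 if Top A = 0) by an element a(x) + b(y) of the kernel of D1 D2, whose restriction to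
  the subdiagonal has degree at most R + 1.
\<close>

section \<open>Operator identities\<close>

definition sigma :: "fun2 \<Rightarrow> fun2" where
  "sigma f = E2 (E1inv (Swap f))"

definition Vsum :: "fun2 \<Rightarrow> fun2" where
  "Vsum f = (\<lambda>x y. V12 f x y + V21 f x y)"

definition Vnil :: "fun2 \<Rightarrow> fun2" where
  "Vnil f = (\<lambda>x y. E1inv (D1 (D2 f)) x y + E2inv (D2 (D1 f)) x y)"

lemmas operator_defs = Vsum_def Vnil_def V12_def V21_def E1inv_def E2inv_def D1_def D2_def E1_def E2_def
  sigma_def Swap_def

lemma D2_D1_commute: "D2 (D1 f) = D1 (D2 f)"
  unfolding operator_defs by (simp add: fun_eq_iff algebra_simps)

lemma D1_D2_diff: "D1 (D2 (\<lambda>x y. f x y - g x y)) = (\<lambda>x y. D1 (D2 f) x y - D1 (D2 g) x y)"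
  unfolding operator_defs by (simp add: fun_eq_iff algebra_simps)

lemma D1_D2_zero: "D1 (D2 (\<lambda>x y. 0)) = (\<lambda>x y. 0)"
  unfolding operator_defs by simp

lemma Vsum_eq_double_plus_Vnil: "Vsum f = (\<lambda>x y. 2 * f x y + Vnil f x y)"
  unfolding operator_defs by (simp add: fun_eq_iff algebra_simps)

lemma Vnil_linear: "Vnil (\<lambda>x y. a * f x y + g x y) = (\<lambda>x y. a * Vnil f x y + Vnil g x y)"
  unfolding operator_defs by (simp add: fun_eq_iff algebra_simps)

lemma Vsum_diff: "Vsum (\<lambda>x y. f x y - g x y) = (\<lambda>x y. Vsum f x y - Vsum g x y)"
  unfolding operator_defs by (simp add: fun_eq_iff algebra_simps)

lemma Vsum_zero: "Vsum (\<lambda>x y. 0) = (\<lambda>x y. 0)"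
  unfolding operator_defs by simp

lemma Top_eq_Vsum_inv: "Top A = (\<lambda>x y. Vsum_inv (V12 A) x y + sigma (Vsum_inv (V12 A)) x y)"
  unfolding Top_def sigma_def Let_def ..

lemma Vsum_D1_D2_commute: "Vsum (D1 (D2 f)) = D1 (D2 (Vsum f))"
  unfolding operator_defs by (simp add: fun_eq_iff algebra_simps)

lemma D1_D2_V12_commute: "D1 (D2 (V12 f)) = V12 (D1 (D2 f))"
  unfolding operator_defs by (simp add: fun_eq_iff algebra_simps)

lemma D1_D2_add_sigma:
  "D1 (D2 (\<lambda>x y. f x y + sigma f x y)) = (\<lambda>x y. D1 (D2 f) x y + sigma (D1 (D2 f)) x y)"
  unfolding operator_defs by (simp add: fun_eq_iff algebra_simps)

lemma V12_subdiag: "V12 f (x + 1) x = f (x + 1) x + D1 (D2 f) x x"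
  unfolding operator_defs by simp

text \<open>Both sides come from evaluating \<open>Vsum (f + sigma f) = Vsum f + sigma (Vsum f)\<close> at \<open>(x + 1, x)\<close>,
  a fixed point of the reflection underlying \<open>sigma\<close>.\<close>

lemma Vsum_subdiag:
  assumes "w = (\<lambda>x y. f x y + sigma f x y)"
  shows "2 * Vsum f (x + 1) x = 2 * w (x + 1) x + D1 (D2 w) x x + D1 (D2 w) (x + 1) (x - 1)"
  unfolding assms operator_defs by (simp add: algebra_simps)

section \<open>Bivariate polynomials with prescribed monomial support\<close>

definition poly2_in :: "(nat \<times> nat) set \<Rightarrow> fun2 \<Rightarrow> bool" where
  "poly2_in S f \<longleftrightarrow> (\<exists>c. f = (\<lambda>x y. \<Sum>(i,j)\<in>S. c i j * x ^ i * y ^ j))"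

definition down_closed :: "(nat \<times> nat) set \<Rightarrow> bool" where
  "down_closed S \<longleftrightarrow> (\<forall>i j i' j'. (i,j) \<in> S \<longrightarrow> i' \<le> i \<longrightarrow> j' \<le> j \<longrightarrow> (i',j') \<in> S)"

lemma poly2_inE:
  assumes "poly2_in S f"
  obtains c where "f = (\<lambda>x y. \<Sum>(i,j)\<in>S. c i j * x ^ i * y ^ j)"
  using assms unfolding poly2_in_def by blast

lemma poly2_in_zero: "poly2_in S (\<lambda>x y. 0)"
  unfolding poly2_in_def by (rule exI[of _ "\<lambda>i j. 0"]) simp

lemma poly2_in_add:
  assumes "poly2_in S f" "poly2_in S g"
  shows "poly2_in S (\<lambda>x y. f x y + g x y)"
proof -
  obtain c d where "f = (\<lambda>x y. \<Sum>(i,j)\<in>S. c i j * x ^ i * y ^ j)"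
    and "g = (\<lambda>x y. \<Sum>(i,j)\<in>S. d i j * x ^ i * y ^ j)"
    using assms unfolding poly2_in_def by blast
  then show ?thesis unfolding poly2_in_def
    by (intro exI[of _ "\<lambda>i j. c i j + d i j"])
      (auto simp: sum.distrib[symmetric] case_prod_beta algebra_simps)
qed

lemma poly2_in_cmult:
  assumes "poly2_in S f"
  shows "poly2_in S (\<lambda>x y. a * f x y)"
proof -
  obtain c where "f = (\<lambda>x y. \<Sum>(i,j)\<in>S. c i j * x ^ i * y ^ j)"
    using assms by (rule poly2_inE)
  then show ?thesis unfolding poly2_in_def
    by (intro exI[of _ "\<lambda>i j. a * c i j"]) (auto simp: sum_distrib_left case_prod_beta algebra_simps)
qed

lemma poly2_in_diff:
  "poly2_in S f \<Longrightarrow> poly2_in S g \<Longrightarrow> poly2_in S (\<lambda>x y. f x y - g x y)"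
  using poly2_in_add[of S f "\<lambda>x y. (-1) * g x y"] poly2_in_cmult[of S g "-1"] by simp

lemma poly2_in_sum:
  "finite I \<Longrightarrow> (\<And>k. k \<in> I \<Longrightarrow> poly2_in S (F k)) \<Longrightarrow> poly2_in S (\<lambda>x y. \<Sum>k\<in>I. F k x y)"
proof (induction I rule: finite_induct)
  case empty
  then show ?case by (simp add: poly2_in_zero)
next
  case (insert a I)
  then show ?case using poly2_in_add[of S "F a" "\<lambda>x y. \<Sum>k\<in>I. F k x y"] by simp
qed

lemma poly2_in_monom:
  assumes "(i,j) \<in> S" "finite S"
  shows "poly2_in S (\<lambda>x y. c * x ^ i * y ^ j)"
  unfolding poly2_in_def
proof (rule exI[of _ "\<lambda>i' j'. if (i',j') = (i,j) then c else 0"], intro ext)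
  fix x y :: complex
  have "(\<Sum>(i',j')\<in>S. (if (i',j') = (i,j) then c else 0) * x ^ i' * y ^ j')
      = (\<Sum>p\<in>S. if p = (i,j) then c * x ^ i * y ^ j else 0)"
    by (rule sum.cong) (auto split: if_splits)
  also have "\<dots> = c * x ^ i * y ^ j"
    using assms by simp
  finally show "c * x ^ i * y ^ j = (\<Sum>(i',j')\<in>S. (if (i',j') = (i,j) then c else 0) * x ^ i' * y ^ j')"
    by simp
qed

lemma poly2_in_subset:
  assumes "poly2_in S f" "S \<subseteq> T" "finite T"
  shows "poly2_in T f"
proof -
  obtain c where f: "f = (\<lambda>x y. \<Sum>(i,j)\<in>S. c i j * x ^ i * y ^ j)"
    using assms(1) by (rule poly2_inE)
  have "finite S"
    using assms(2,3) finite_subset by blast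
  then show ?thesis unfolding f
    by (rule poly2_in_sum) (use assms(2,3) in \<open>auto intro!: poly2_in_monom\<close>)
qed

lemma poly2_in_shift:
  assumes "poly2_in S f" "finite S" "down_closed S"
  shows "poly2_in S (\<lambda>x y. f (x + s) (y + t))"
proof -
  obtain c where f: "f = (\<lambda>x y. \<Sum>(i,j)\<in>S. c i j * x ^ i * y ^ j)"
    using assms(1) by (rule poly2_inE)
  have binomial: "(x + a) ^ i = (\<Sum>k\<le>i. of_nat (i choose k) * a ^ (i - k) * x ^ k)" for x a :: complex and i
    by (simp add: binomial_ring mult_ac)
  have expand: "(\<lambda>x y. f (x + s) (y + t)) = (\<lambda>x y. \<Sum>p\<in>S. \<Sum>k\<le>fst p. \<Sum>l\<le>snd p.
      (c (fst p) (snd p) * (of_nat (fst p choose k) * s ^ (fst p - k))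
        * (of_nat (snd p choose l) * t ^ (snd p - l))) * x ^ k * y ^ l)"
    unfolding f binomial
    by (intro ext sum.cong refl) (simp add: case_prod_beta sum_distrib_left sum_distrib_right sum_product mult_ac)
  show ?thesis unfolding expand
  proof (intro poly2_in_sum)
    fix p k l
    assume "p \<in> S" "k \<in> {..fst p}" "l \<in> {..snd p}"
    then have "(k,l) \<in> S"
      using assms(3) unfolding down_closed_def by (cases p) auto
    then show "poly2_in S (\<lambda>x y. (c (fst p) (snd p) * (of_nat (fst p choose k) * s ^ (fst p - k))
        * (of_nat (snd p choose l) * t ^ (snd p - l))) * x ^ k * y ^ l)"
      using assms(2) by (rule poly2_in_monom)
  qed (auto simp: assms)
qed

lemma poly2_in_E1: "poly2_in S f \<Longrightarrow> finite S \<Longrightarrow> down_closed S \<Longrightarrow> poly2_in S (E1 f)"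
  using poly2_in_shift[of S f 1 0] by (simp add: E1_def)

lemma poly2_in_E2: "poly2_in S f \<Longrightarrow> finite S \<Longrightarrow> down_closed S \<Longrightarrow> poly2_in S (E2 f)"
  using poly2_in_shift[of S f 0 1] by (simp add: E2_def)

lemma poly2_in_E1inv: "poly2_in S f \<Longrightarrow> finite S \<Longrightarrow> down_closed S \<Longrightarrow> poly2_in S (E1inv f)"
  using poly2_in_shift[of S f "-1" 0] by (simp add: E1inv_def)

lemma poly2_in_E2inv: "poly2_in S f \<Longrightarrow> finite S \<Longrightarrow> down_closed S \<Longrightarrow> poly2_in S (E2inv f)"
  using poly2_in_shift[of S f 0 "-1"] by (simp add: E2inv_def)

lemma poly2_in_Swap:
  assumes "poly2_in S f" "finite S" "finite T" "\<And>i j. (i,j) \<in> S \<Longrightarrow> (j,i) \<in> T"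
  shows "poly2_in T (Swap f)"
proof -
  obtain c where f: "f = (\<lambda>x y. \<Sum>(i,j)\<in>S. c i j * x ^ i * y ^ j)"
    using assms(1) by (rule poly2_inE)
  have "Swap f = (\<lambda>x y. \<Sum>p\<in>S. c (fst p) (snd p) * x ^ snd p * y ^ fst p)"
    unfolding f Swap_def by (intro ext sum.cong refl) (simp add: case_prod_beta mult_ac)
  then show ?thesis
    using assms by (auto intro!: poly2_in_sum poly2_in_monom)
qed

lemma power_succ_diff: "(x + 1) ^ i - x ^ i = (\<Sum>k<i. of_nat (i choose k) * x ^ k)" for x :: complex
proof -
  have "(x + 1) ^ i = (\<Sum>k<Suc i. of_nat (i choose k) * x ^ k)"
    unfolding lessThan_Suc_atMost binomial_ring by (simp add: mult_ac)
  then show ?thesis by simp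
qed

lemma poly2_in_D1:
  assumes "poly2_in S f" "finite S" "finite T" "\<And>i j k. (i,j) \<in> S \<Longrightarrow> k < i \<Longrightarrow> (k,j) \<in> T"
  shows "poly2_in T (D1 f)"
proof -
  obtain c where f: "f = (\<lambda>x y. \<Sum>(i,j)\<in>S. c i j * x ^ i * y ^ j)"
    using assms(1) by (rule poly2_inE)
  have "D1 f x y = (\<Sum>p\<in>S. c (fst p) (snd p) * ((x + 1) ^ fst p - x ^ fst p) * y ^ snd p)" for x y
    unfolding f D1_def E1_def by (simp add: case_prod_beta sum_subtractf[symmetric] algebra_simps)
  then have "D1 f = (\<lambda>x y. \<Sum>p\<in>S. \<Sum>k<fst p. (c (fst p) (snd p) * of_nat (fst p choose k)) * x ^ k * y ^ snd p)"
    unfolding power_succ_diff by (simp add: fun_eq_iff sum_distrib_left sum_distrib_right mult_ac)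
  then show ?thesis
    using assms by (auto intro!: poly2_in_sum poly2_in_monom)
qed

lemma poly2_in_D2:
  assumes "poly2_in S f" "finite S" "finite T" "\<And>i j k. (i,j) \<in> S \<Longrightarrow> k < j \<Longrightarrow> (i,k) \<in> T"
  shows "poly2_in T (D2 f)"
proof -
  obtain c where f: "f = (\<lambda>x y. \<Sum>(i,j)\<in>S. c i j * x ^ i * y ^ j)"
    using assms(1) by (rule poly2_inE)
  have "D2 f x y = (\<Sum>p\<in>S. c (fst p) (snd p) * x ^ fst p * ((y + 1) ^ snd p - y ^ snd p))" for x y
    unfolding f D2_def E2_def by (simp add: case_prod_beta sum_subtractf[symmetric] algebra_simps)
  then have "D2 f = (\<lambda>x y. \<Sum>p\<in>S. \<Sum>k<snd p. (c (fst p) (snd p) * of_nat (snd p choose k)) * x ^ fst p * y ^ k)"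
    unfolding power_succ_diff by (simp add: fun_eq_iff sum_distrib_left sum_distrib_right mult_ac)
  then show ?thesis
    using assms by (auto intro!: poly2_in_sum poly2_in_monom)
qed

definition box :: "nat \<Rightarrow> (nat \<times> nat) set" where
  "box n = {..n} \<times> {..n}"

definition triangle :: "nat \<Rightarrow> (nat \<times> nat) set" where
  "triangle n = {(i,j). i + j \<le> n}"

lemma finite_box [simp]: "finite (box n)"
  unfolding box_def by simp

lemma down_closed_box [simp]: "down_closed (box n)"
  unfolding box_def down_closed_def by auto

lemma box_mono: "m \<le> n \<Longrightarrow> box m \<subseteq> box n"
  unfolding box_def by auto

lemma triangle_subset_box: "triangle n \<subseteq> box n"
  unfolding triangle_def box_def by auto

lemma finite_triangle [simp]: "finite (triangle n)"
  using finite_subset[OF triangle_subset_box] by simp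

lemma down_closed_triangle [simp]: "down_closed (triangle n)"
  unfolding triangle_def down_closed_def by auto

lemma Suc_Suc_mem_box: "(i,j) \<in> box n \<Longrightarrow> (Suc i, Suc j) \<in> box (Suc n)"
  unfolding box_def by simp

lemma Suc_Suc_mem_triangle: "(i,j) \<in> triangle n \<Longrightarrow> (Suc i, Suc j) \<in> triangle (n + 2)"
  unfolding triangle_def by simp

lemma poly2_in_box_iff:
  "poly2_in (box n) f \<longleftrightarrow> (\<exists>c. f = (\<lambda>x y. \<Sum>i\<le>n. \<Sum>j\<le>n. c i j * x ^ i * y ^ j))"
  unfolding poly2_in_def box_def by (simp add: sum.cartesian_product)

lemma poly2_iff_poly2_in_box: "poly2 f \<longleftrightarrow> (\<exists>n. poly2_in (box n) f)"
  unfolding poly2_def poly2_in_box_iff by blast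

lemma deg_each_le_iff_poly2_in_box: "deg_each_le f n \<longleftrightarrow> poly2_in (box n) f"
  unfolding deg_each_le_def poly2_in_box_iff by blast

lemma total_deg_le_iff_poly2_in_triangle: "total_deg_le f n \<longleftrightarrow> poly2_in (triangle n) f"
  unfolding total_deg_le_def poly2_in_def triangle_def by blast

lemma poly2_in_box_D1_D2: "poly2_in (box n) f \<Longrightarrow> poly2_in (box n) (D1 (D2 f))"
  by (rule poly2_in_D1[of "box n"], rule poly2_in_D2[of "box n"]) (auto simp: box_def)

lemma poly2_in_box_V12: "poly2_in (box n) f \<Longrightarrow> poly2_in (box n) (V12 f)"
  unfolding V12_def by (intro poly2_in_add poly2_in_E1inv poly2_in_box_D1_D2 finite_box down_closed_box)

section \<open>Univariate polynomials\<close>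

definition poly1_deg_le :: "nat \<Rightarrow> (complex \<Rightarrow> complex) \<Rightarrow> bool" where
  "poly1_deg_le n p \<longleftrightarrow> (\<exists>a. p = (\<lambda>x. \<Sum>k\<le>n. a k * x ^ k))"

lemma poly1_deg_leE:
  assumes "poly1_deg_le n p"
  obtains a where "p = (\<lambda>x. \<Sum>k\<le>n. a k * x ^ k)"
  using assms unfolding poly1_deg_le_def by blast

lemma poly1_deg_le_zero: "poly1_deg_le n (\<lambda>x. 0)"
  unfolding poly1_deg_le_def by (rule exI[of _ "\<lambda>k. 0"]) simp

lemma poly1_deg_le_add:
  assumes "poly1_deg_le n p" "poly1_deg_le n q"
  shows "poly1_deg_le n (\<lambda>x. p x + q x)"
proof -
  obtain a b where "p = (\<lambda>x. \<Sum>k\<le>n. a k * x ^ k)" "q = (\<lambda>x. \<Sum>k\<le>n. b k * x ^ k)"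
    using assms unfolding poly1_deg_le_def by blast
  then show ?thesis unfolding poly1_deg_le_def
    by (intro exI[of _ "\<lambda>k. a k + b k"]) (auto simp: sum.distrib[symmetric] algebra_simps)
qed

lemma poly1_deg_le_cmult:
  assumes "poly1_deg_le n p"
  shows "poly1_deg_le n (\<lambda>x. c * p x)"
proof -
  obtain a where "p = (\<lambda>x. \<Sum>k\<le>n. a k * x ^ k)"
    using assms by (rule poly1_deg_leE)
  then show ?thesis unfolding poly1_deg_le_def
    by (intro exI[of _ "\<lambda>k. c * a k"]) (auto simp: sum_distrib_left algebra_simps)
qed

lemma poly1_deg_le_diff:
  "poly1_deg_le n p \<Longrightarrow> poly1_deg_le n q \<Longrightarrow> poly1_deg_le n (\<lambda>x. p x - q x)"
  using poly1_deg_le_add[of n p "\<lambda>x. (-1) * q x"] poly1_deg_le_cmult[of n q "-1"] by simp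

lemma poly1_deg_le_sum:
  "finite I \<Longrightarrow> (\<And>k. k \<in> I \<Longrightarrow> poly1_deg_le n (F k)) \<Longrightarrow> poly1_deg_le n (\<lambda>x. \<Sum>k\<in>I. F k x)"
proof (induction I rule: finite_induct)
  case empty
  then show ?case by (simp add: poly1_deg_le_zero)
next
  case (insert a I)
  then show ?case using poly1_deg_le_add[of n "F a" "\<lambda>x. \<Sum>k\<in>I. F k x"] by simp
qed

lemma poly1_deg_le_monom:
  assumes "k \<le> n"
  shows "poly1_deg_le n (\<lambda>x. c * x ^ k)"
  unfolding poly1_deg_le_def
proof (rule exI[of _ "\<lambda>k'. if k' = k then c else 0"], intro ext)
  fix x :: complex
  have "(\<Sum>k'\<le>n. (if k' = k then c else 0) * x ^ k') = (\<Sum>k'\<le>n. if k' = k then c * x ^ k else 0)"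
    by (rule sum.cong) auto
  also have "\<dots> = c * x ^ k"
    using assms by simp
  finally show "c * x ^ k = (\<Sum>k'\<le>n. (if k' = k then c else 0) * x ^ k')"
    by simp
qed

lemma poly1_deg_le_const: "poly1_deg_le n (\<lambda>x. c)"
  using poly1_deg_le_monom[of 0 n c] by simp

lemma poly1_deg_le_mono:
  assumes "poly1_deg_le m p" "m \<le> n"
  shows "poly1_deg_le n p"
proof -
  obtain a where "p = (\<lambda>x. \<Sum>k\<le>m. a k * x ^ k)"
    using assms(1) by (rule poly1_deg_leE)
  then show ?thesis
    using assms(2) by (auto intro!: poly1_deg_le_sum poly1_deg_le_monom)
qed

lemma poly1_periodic_const:
  assumes "poly1_deg_le n p" "\<And>t. p (t + 1) = p t"
  shows "p t = p 0"
proof -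
  obtain a where p: "p = (\<lambda>x. \<Sum>k\<le>n. a k * x ^ k)"
    using assms(1) by (rule poly1_deg_leE)
  have at_nat: "p (of_nat m) = p 0" for m
  proof (induction m)
    case (Suc m)
    then show ?case
      using assms(2)[of "of_nat m"] by (simp add: add.commute)
  qed simp
  define b where "b k = (if k = 0 then a 0 - p 0 else a k)" for k
  have b: "(\<Sum>k\<le>n. b k * x ^ k) = p x - p 0" for x
  proof -
    have "(\<Sum>k\<le>n. b k * x ^ k) = (\<Sum>k\<le>n. a k * x ^ k - (if k = 0 then p 0 else 0))"
      unfolding b_def by (intro sum.cong) (auto simp: algebra_simps)
    then show ?thesis
      unfolding sum_subtractf by (simp add: p)
  qed
  have "range (of_nat :: nat \<Rightarrow> complex) \<subseteq> {x. (\<Sum>k\<le>n. b k * x ^ k) = 0}"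
    using at_nat b by auto
  moreover have "infinite (range (of_nat :: nat \<Rightarrow> complex))"
    by (metis finite_imageD infinite_UNIV_char_0 inj_on_of_nat)
  ultimately have "infinite {x. (\<Sum>k\<le>n. b k * x ^ k) = 0}"
    using finite_subset by blast
  then have "\<forall>k\<le>n. b k = 0"
    using polyfun_finite_roots by blast
  then have "(\<Sum>k\<le>n. b k * t ^ k) = 0"
    by simp
  then show ?thesis
    using b by simp
qed

lemma poly1_deg_le_fix_snd:
  assumes "poly2_in S f" "finite S" "\<And>i j. (i,j) \<in> S \<Longrightarrow> i \<le> n"
  shows "poly1_deg_le n (\<lambda>x. f x t)"
proof -
  obtain c where f: "f = (\<lambda>x y. \<Sum>(i,j)\<in>S. c i j * x ^ i * y ^ j)"
    using assms(1) by (rule poly2_inE)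
  have "(\<lambda>x. f x t) = (\<lambda>x. \<Sum>p\<in>S. (c (fst p) (snd p) * t ^ snd p) * x ^ fst p)"
    unfolding f by (intro ext sum.cong refl) (simp add: case_prod_beta mult_ac)
  then show ?thesis
    using assms by (auto intro!: poly1_deg_le_sum poly1_deg_le_monom)
qed

lemma poly1_deg_le_fix_fst:
  assumes "poly2_in S f" "finite S" "\<And>i j. (i,j) \<in> S \<Longrightarrow> j \<le> n"
  shows "poly1_deg_le n (\<lambda>y. f t y)"
proof -
  have "poly2_in (prod.swap ` S) (Swap f)"
    using assms(2) by (intro poly2_in_Swap[OF assms(1,2)]) (auto intro: rev_image_eqI)
  then have "poly1_deg_le n (\<lambda>y. Swap f y t)"
    by (rule poly1_deg_le_fix_snd) (use assms(2,3) in auto)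
  then show ?thesis
    by (simp add: Swap_def)
qed

lemma poly1_deg_le_diag:
  assumes "poly2_in S f" "finite S" "\<And>i j. (i,j) \<in> S \<Longrightarrow> i + j \<le> n"
  shows "poly1_deg_le n (\<lambda>x. f x x)"
proof -
  obtain c where f: "f = (\<lambda>x y. \<Sum>(i,j)\<in>S. c i j * x ^ i * y ^ j)"
    using assms(1) by (rule poly2_inE)
  have "(\<lambda>x. f x x) = (\<lambda>x. \<Sum>p\<in>S. c (fst p) (snd p) * x ^ (fst p + snd p))"
    unfolding f by (intro ext sum.cong refl) (simp add: case_prod_beta mult_ac power_add)
  then show ?thesis
    using assms by (auto intro!: poly1_deg_le_sum poly1_deg_le_monom)
qed

lemma poly1_deg_le_diag_triangle:
  assumes "poly2_in (triangle n) f"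
  shows "poly1_deg_le n (\<lambda>x. f x x)"
  using assms finite_triangle by (rule poly1_deg_le_diag) (simp add: triangle_def)

section \<open>Anti-differences and the kernel of D1 D2\<close>

lemma poly1_antidifference_power: "\<exists>P. poly1_deg_le (Suc i) P \<and> (\<forall>x. P (x + 1) - P x = x ^ i)"
proof (induction i rule: less_induct)
  case (less i)
  then obtain Q where Q: "\<And>k. k < i \<Longrightarrow> poly1_deg_le (Suc k) (Q k) \<and> (\<forall>x. Q k (x + 1) - Q k x = x ^ k)"
    by metis
  \<comment> \<open>solve (x+1)^(i+1) - x^(i+1) = (i+1) x^i + (lower powers) for x^i\<close>
  define P where "P x = inverse (of_nat (Suc i)) * (x ^ Suc i - (\<Sum>k<i. of_nat (Suc i choose k) * Q k x))"
    for x :: complex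
  have "poly1_deg_le (Suc i) (\<lambda>x. 1 * x ^ Suc i)"
    by (rule poly1_deg_le_monom) simp
  moreover have "poly1_deg_le (Suc i) (Q k)" if "k < i" for k
    using Q[OF that] that by (auto elim: poly1_deg_le_mono)
  ultimately have "poly1_deg_le (Suc i) P"
    unfolding P_def[abs_def] by (intro poly1_deg_le_cmult poly1_deg_le_diff poly1_deg_le_sum) auto
  moreover have "P (x + 1) - P x = x ^ i" for x
  proof -
    let ?c = "of_nat (Suc i) :: complex"
    have Q_diff: "(\<Sum>k<i. of_nat (Suc i choose k) * Q k (x + 1)) - (\<Sum>k<i. of_nat (Suc i choose k) * Q k x)
        = (\<Sum>k<i. of_nat (Suc i choose k) * x ^ k)"
      unfolding sum_subtractf[symmetric] right_diff_distrib[symmetric] using Q by (intro sum.cong) auto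
    have "P (x + 1) - P x = inverse ?c * (((x + 1) ^ Suc i - x ^ Suc i)
        - ((\<Sum>k<i. of_nat (Suc i choose k) * Q k (x + 1)) - (\<Sum>k<i. of_nat (Suc i choose k) * Q k x)))"
      unfolding P_def by (simp add: algebra_simps)
    also have "\<dots> = inverse ?c * (?c * x ^ i)"
      unfolding Q_diff power_succ_diff by simp
    also have "\<dots> = x ^ i"
      by (simp del: of_nat_Suc)
    finally show ?thesis .
  qed
  ultimately show ?case by blast
qed

lemma poly2_in_tensor:
  assumes "poly1_deg_le m p" "poly1_deg_le n q" "finite T" "\<And>k l. k \<le> m \<Longrightarrow> l \<le> n \<Longrightarrow> (k,l) \<in> T"
  shows "poly2_in T (\<lambda>x y. c * p x * q y)"
proof -
  obtain a b where "p = (\<lambda>x. \<Sum>k\<le>m. a k * x ^ k)" "q = (\<lambda>x. \<Sum>k\<le>n. b k * x ^ k)"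
    using assms(1,2) unfolding poly1_deg_le_def by blast
  then have "(\<lambda>x y. c * p x * q y) = (\<lambda>x y. \<Sum>k\<le>m. \<Sum>l\<le>n. (c * a k * b l) * x ^ k * y ^ l)"
    by (simp add: sum_distrib_left sum_distrib_right sum_product mult_ac)
  then show ?thesis
    using assms(3,4) by (auto intro!: poly2_in_sum poly2_in_monom)
qed

lemma poly2_antidifference:
  assumes "poly2_in S f" "finite S" "finite T" "down_closed T"
    and "\<And>i j. (i,j) \<in> S \<Longrightarrow> (Suc i, Suc j) \<in> T"
  shows "\<exists>F. poly2_in T F \<and> D1 (D2 F) = f"
proof -
  obtain c where f: "f = (\<lambda>x y. \<Sum>(i,j)\<in>S. c i j * x ^ i * y ^ j)"
    using assms(1) by (rule poly2_inE)
  obtain P where P: "\<And>i. poly1_deg_le (Suc i) (P i)" "\<And>i x. P i (x + 1) - P i x = x ^ i"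
    using poly1_antidifference_power by metis
  define F where "F x y = (\<Sum>p\<in>S. c (fst p) (snd p) * P (fst p) x * P (snd p) y)" for x y
  have "poly2_in T F"
    unfolding F_def
  proof (intro poly2_in_sum[OF assms(2)])
    fix p
    assume "p \<in> S"
    then have "(Suc (fst p), Suc (snd p)) \<in> T"
      using assms(5)[of "fst p" "snd p"] by simp
    then show "poly2_in T (\<lambda>x y. c (fst p) (snd p) * P (fst p) x * P (snd p) y)"
      using assms(4) by (intro poly2_in_tensor[OF P(1) P(1) assms(3)]) (auto simp: down_closed_def)
  qed
  moreover have "D1 (D2 F) x y = f x y" for x y
  proof -
    have "D1 (D2 F) x y = (\<Sum>p\<in>S. c (fst p) (snd p)
        * (P (fst p) (x + 1) - P (fst p) x) * (P (snd p) (y + 1) - P (snd p) y))"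
      unfolding F_def D1_def D2_def E1_def E2_def by (simp add: sum_subtractf[symmetric] algebra_simps)
    then show ?thesis
      unfolding P(2) f by (simp add: case_prod_beta)
  qed
  ultimately show ?thesis by blast
qed

lemma D1_D2_kernel:
  assumes "poly2_in (box n) z" "D1 (D2 z) = (\<lambda>x y. 0)"
  shows "z x y = z x 0 + z 0 y - z 0 0"
proof -
  have coord_le: "\<And>i j. (i,j) \<in> box n \<Longrightarrow> i \<le> n" "\<And>i j. (i,j) \<in> box n \<Longrightarrow> j \<le> n"
    unfolding box_def by auto
  have "poly2_in (box n) (D1 z)"
    unfolding D1_def using poly2_in_diff[OF poly2_in_E1[OF assms(1) finite_box down_closed_box] assms(1)] .
  then have D1_const: "D1 z s t = D1 z s 0" for s t
  proof (rule poly1_periodic_const[OF poly1_deg_le_fix_fst[OF _ finite_box coord_le(2)]])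
    fix t
    have "D2 (D1 z) s t = 0"
      by (simp add: D2_D1_commute assms(2))
    then show "D1 z s (t + 1) = D1 z s t"
      unfolding D2_def E2_def by simp
  qed
  have "z x y - z x 0 = z 0 y - z 0 0"
  proof (rule poly1_periodic_const[of n "\<lambda>x. z x y - z x 0", simplified])
    show "poly1_deg_le n (\<lambda>x. z x y - z x 0)"
      by (intro poly1_deg_le_diff poly1_deg_le_fix_snd[OF assms(1) finite_box coord_le(1)])
    show "z (t + 1) y - z (t + 1) 0 = z t y - z t 0" for t
      using D1_const[of t y] unfolding D1_def E1_def by (simp add: algebra_simps)
  qed
  then show ?thesis by (simp add: algebra_simps)
qed

section \<open>Inverting V12 + V21 on polynomials\<close>

text \<open>\<open>Vnil\<close> maps \<open>poly2_in S\<close> into \<open>poly2_in (diag_pred S)\<close>, so it is nilpotent on polynomials and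
  \<open>Vsum = 2 id + Vnil\<close> is invertible by induction on the size of the support.\<close>

definition diag_pred :: "(nat \<times> nat) set \<Rightarrow> (nat \<times> nat) set" where
  "diag_pred S = {(i,j). (Suc i, Suc j) \<in> S}"

lemma diag_pred_subset: "down_closed S \<Longrightarrow> diag_pred S \<subseteq> S"
  unfolding down_closed_def diag_pred_def by auto

lemma down_closed_diag_pred: "down_closed S \<Longrightarrow> down_closed (diag_pred S)"
  unfolding down_closed_def diag_pred_def by auto

lemma finite_diag_pred: "finite S \<Longrightarrow> down_closed S \<Longrightarrow> finite (diag_pred S)"
  using diag_pred_subset finite_subset by blast

lemma card_diag_pred_less:
  assumes "finite S" "down_closed S" "S \<noteq> {}"
  shows "card (diag_pred S) < card S"
proof -
  define m where "m = Max (fst ` S)"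
  have "m \<in> fst ` S"
    unfolding m_def using assms by (intro Max_in) auto
  then obtain j where mj: "(m,j) \<in> S" by force
  have "(m,j) \<notin> diag_pred S"
  proof
    assume "(m,j) \<in> diag_pred S"
    then have "Suc m \<in> fst ` S"
      unfolding diag_pred_def by force
    then have "Suc m \<le> m"
      unfolding m_def using assms(1) by (intro Max_ge) simp_all
    then show False
      by simp
  qed
  then have "diag_pred S \<subset> S"
    using diag_pred_subset[OF assms(2)] mj by blast
  then show ?thesis
    using assms(1) by (simp add: psubset_card_mono)
qed

lemma poly2_in_Vnil:
  assumes "poly2_in S f" "finite S" "down_closed S"
  shows "poly2_in (diag_pred S) (Vnil f)"
proof -
  let ?S1 = "{(i,j). (Suc i, j) \<in> S}" and ?S2 = "{(i,j). (i, Suc j) \<in> S}"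
  have fin: "finite ?S1" "finite ?S2"
    by (rule finite_subset[OF _ assms(2)]; use assms(3) in \<open>auto simp: down_closed_def\<close>)+
  have fin_diag: "finite (diag_pred S)"
    using assms(2,3) by (rule finite_diag_pred)
  have "poly2_in ?S2 (D2 f)"
    by (rule poly2_in_D2[OF assms(1,2) fin(2)]) (use assms(3) in \<open>auto simp: down_closed_def\<close>)
  then have D12: "poly2_in (diag_pred S) (D1 (D2 f))"
    by (rule poly2_in_D1[OF _ fin(2) fin_diag]) (use assms(3) in \<open>auto simp: down_closed_def diag_pred_def\<close>)
  have "poly2_in ?S1 (D1 f)"
    by (rule poly2_in_D1[OF assms(1,2) fin(1)]) (use assms(3) in \<open>auto simp: down_closed_def\<close>)
  then have D21: "poly2_in (diag_pred S) (D2 (D1 f))"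
    by (rule poly2_in_D2[OF _ fin(1) fin_diag]) (use assms(3) in \<open>auto simp: down_closed_def diag_pred_def\<close>)
  from D12 D21 show ?thesis
    unfolding Vnil_def using fin_diag down_closed_diag_pred[OF assms(3)]
    by (intro poly2_in_add poly2_in_E1inv poly2_in_E2inv)
qed

lemma poly2_in_empty: "poly2_in {} f \<Longrightarrow> f = (\<lambda>x y. 0)"
  unfolding poly2_in_def by auto

lemma Vsum_onto_poly2_in:
  "finite S \<Longrightarrow> down_closed S \<Longrightarrow> poly2_in S h \<Longrightarrow> \<exists>g. poly2_in S g \<and> Vsum g = h"
proof (induction "card S" arbitrary: S h rule: less_induct)
  case less
  show ?case
  proof (cases "S = {}")
    case True
    then have "h = (\<lambda>x y. 0)"
      using less.prems poly2_in_empty by blast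
    then show ?thesis
      using poly2_in_zero Vsum_zero by blast
  next
    case False
    have "poly2_in (diag_pred S) (\<lambda>x y. (-1/2) * Vnil h x y)"
      using poly2_in_cmult poly2_in_Vnil less.prems by blast
    then obtain g1 where g1: "poly2_in (diag_pred S) g1" "Vsum g1 = (\<lambda>x y. (-1/2) * Vnil h x y)"
      using less.hyps[OF card_diag_pred_less[OF less.prems(1,2) False]] less.prems
      by (meson finite_diag_pred down_closed_diag_pred)
    define g where "g x y = (1/2) * h x y + g1 x y" for x y
    have "poly2_in S g"
      unfolding g_def using less.prems g1(1) diag_pred_subset
      by (metis poly2_in_add poly2_in_cmult poly2_in_subset)
    moreover have "Vsum g x y = h x y" for x y
    proof -
      have g1_xy: "2 * g1 x y + Vnil g1 x y = (-1/2) * Vnil h x y"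
        using g1(2) unfolding Vsum_eq_double_plus_Vnil by (simp add: fun_eq_iff)
      have "Vsum g x y = h x y + (2 * g1 x y + Vnil g1 x y) + (1/2) * Vnil h x y"
        unfolding g_def[abs_def] Vsum_eq_double_plus_Vnil Vnil_linear by (simp add: algebra_simps)
      then show ?thesis
        unfolding g1_xy by simp
    qed
    ultimately show ?thesis
      by (intro exI[of _ g]) (simp add: fun_eq_iff)
  qed
qed

lemma Vsum_kernel_poly2_in:
  "finite S \<Longrightarrow> down_closed S \<Longrightarrow> poly2_in S g \<Longrightarrow> Vsum g = (\<lambda>x y. 0) \<Longrightarrow> g = (\<lambda>x y. 0)"
proof (induction "card S" arbitrary: S g rule: less_induct)
  case less
  show ?case
  proof (cases "S = {}")
    case True
    then show ?thesis
      using less.prems poly2_in_empty by blast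
  next
    case False
    have "g x y = (-1/2) * Vnil g x y" for x y
    proof -
      have "2 * g x y + Vnil g x y = 0"
        using less.prems(4) unfolding Vsum_eq_double_plus_Vnil by (simp add: fun_eq_iff)
      then show ?thesis
        by (simp add: algebra_simps eq_neg_iff_add_eq_0[symmetric])
    qed
    then have "g = (\<lambda>x y. (-1/2) * Vnil g x y)"
      by blast
    moreover have "poly2_in (diag_pred S) (\<lambda>x y. (-1/2) * Vnil g x y)"
      using poly2_in_cmult poly2_in_Vnil less.prems by blast
    ultimately show ?thesis
      using less.hyps[OF card_diag_pred_less[OF less.prems(1,2) False]] less.prems
      by (metis finite_diag_pred down_closed_diag_pred)
  qed
qed

lemma Vsum_inv_eqI:
  assumes "poly2 g" "Vsum g = h"
  shows "Vsum_inv h = g"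
  unfolding Vsum_inv_def
proof (rule the_equality)
  show "poly2 g \<and> (\<lambda>x y. V12 g x y + V21 g x y) = h"
    using assms unfolding Vsum_def by blast
next
  fix g'
  assume g': "poly2 g' \<and> (\<lambda>x y. V12 g' x y + V21 g' x y) = h"
  then have "Vsum g' = h"
    unfolding Vsum_def by blast
  then have "Vsum (\<lambda>x y. g' x y - g x y) = (\<lambda>x y. 0)"
    unfolding Vsum_diff using assms(2) by simp
  moreover obtain m n where "poly2_in (box m) g" "poly2_in (box n) g'"
    using assms(1) g' unfolding poly2_iff_poly2_in_box by blast
  then have "poly2_in (box (max m n)) g" "poly2_in (box (max m n)) g'"
    by (auto elim!: poly2_in_subset simp: box_def)
  then have "poly2_in (box (max m n)) (\<lambda>x y. g' x y - g x y)"
    by (rule poly2_in_diff[rotated])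
  ultimately have "(\<lambda>x y. g' x y - g x y) = (\<lambda>x y. 0)"
    using Vsum_kernel_poly2_in finite_box down_closed_box by blast
  then show "g' = g"
    by (simp add: fun_eq_iff)
qed

section \<open>The operator T on the subdiagonal\<close>

lemma poly2_in_box_sigma: "poly2_in (box n) f \<Longrightarrow> poly2_in (box n) (sigma f)"
  unfolding sigma_def
  by (intro poly2_in_E2 poly2_in_E1inv finite_box down_closed_box poly2_in_Swap[of "box n"])
    (auto simp: box_def)

lemma Top_eq_D1_D2:
  assumes "poly2_in (box n) \<psi>" "Vsum \<psi> = V12 \<Phi>" "D1 (D2 \<Phi>) = A"
  shows "Top A = D1 (D2 (\<lambda>x y. \<psi> x y + sigma \<psi> x y))"
proof -
  have "Vsum (D1 (D2 \<psi>)) = V12 A"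
    unfolding Vsum_D1_D2_commute assms(2) D1_D2_V12_commute assms(3) ..
  then have "Vsum_inv (V12 A) = D1 (D2 \<psi>)"
    using assms(1) poly2_in_box_D1_D2 poly2_iff_poly2_in_box by (blast intro: Vsum_inv_eqI)
  then show ?thesis
    unfolding Top_eq_Vsum_inv D1_D2_add_sigma by simp
qed

lemma poly1_deg_le_subdiag:
  assumes "poly2_in (box n) w" "poly2_in (triangle n) w0" "D1 (D2 w0) = D1 (D2 w)"
  shows "poly1_deg_le n (\<lambda>k. w (k + 1) k)"
proof -
  define z where "z x y = w x y - w0 x y" for x y
  have z: "poly2_in (box n) z"
    unfolding z_def[abs_def]
    using poly2_in_diff[OF assms(1) poly2_in_subset[OF assms(2) triangle_subset_box finite_box]] .
  have "D1 (D2 z) = (\<lambda>x y. 0)"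
    unfolding z_def[abs_def] D1_D2_diff assms(3) by simp
  then have "w (k + 1) k = (E1 w0 k k + E1 z k 0) + (z 0 k - z 0 0)" for k
  proof -
    have "w (k + 1) k = w0 (k + 1) k + z (k + 1) k"
      by (simp add: z_def)
    also have "z (k + 1) k = z (k + 1) 0 + z 0 k - z 0 0"
      using D1_D2_kernel[OF z \<open>D1 (D2 z) = (\<lambda>x y. 0)\<close>] .
    finally show ?thesis
      by (simp add: E1_def)
  qed
  moreover have "poly1_deg_le n (\<lambda>k. (E1 w0 k k + E1 z k 0) + (z 0 k - z 0 0))"
  proof (intro poly1_deg_le_add poly1_deg_le_diff poly1_deg_le_const)
    show "poly1_deg_le n (\<lambda>k. E1 w0 k k)"
      by (intro poly1_deg_le_diag_triangle poly2_in_E1 assms(2) finite_triangle down_closed_triangle)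
    show "poly1_deg_le n (\<lambda>k. E1 z k 0)"
      by (rule poly1_deg_le_fix_snd[OF poly2_in_E1[OF z finite_box down_closed_box]]) (auto simp: box_def)
    show "poly1_deg_le n (\<lambda>k. z 0 k)"
      by (rule poly1_deg_le_fix_fst[OF z]) (auto simp: box_def)
  qed
  ultimately show ?thesis by simp
qed

lemma poly1_deg_le_Vsum_subdiag:
  assumes "poly2_in (box n) \<psi>" and "w = (\<lambda>x y. \<psi> x y + sigma \<psi> x y)"
    and "poly2_in (triangle n) w0" "D1 (D2 w0) = D1 (D2 w)"
    and "poly2_in (triangle R) (D1 (D2 w))" "R \<le> n"
  shows "poly1_deg_le n (\<lambda>k. Vsum \<psi> (k + 1) k)"
proof -
  let ?T = "D1 (D2 w)"
  have "poly2_in (box n) w"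
    unfolding assms(2) using assms(1) by (intro poly2_in_add poly2_in_box_sigma)
  then have "poly1_deg_le n (\<lambda>k. w (k + 1) k)"
    using assms(3,4) by (rule poly1_deg_le_subdiag)
  moreover have "poly1_deg_le n (\<lambda>k. ?T k k)"
    using poly1_deg_le_diag_triangle[OF assms(5)] assms(6) by (rule poly1_deg_le_mono)
  moreover have "poly1_deg_le n (\<lambda>k. ?T (k + 1) (k - 1))"
  proof -
    have "poly2_in (triangle R) (E1 (E2inv ?T))"
      by (intro poly2_in_E1 poly2_in_E2inv assms(5) finite_triangle down_closed_triangle)
    then have "poly1_deg_le R (\<lambda>k. E1 (E2inv ?T) k k)"
      by (rule poly1_deg_le_diag_triangle)
    then show ?thesis
      using assms(6) unfolding E1_def E2inv_def by (simp add: poly1_deg_le_mono)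
  qed
  ultimately have "poly1_deg_le n (\<lambda>k. (1/2) * (2 * w (k + 1) k + ?T k k + ?T (k + 1) (k - 1)))"
    by (intro poly1_deg_le_cmult poly1_deg_le_add)
  then show ?thesis
    unfolding Vsum_subdiag[OF assms(2), symmetric] by simp
qed

section \<open>Polynomials in three integer variables\<close>

definition poly3_in :: "nat \<Rightarrow> nat \<Rightarrow> (int \<Rightarrow> int \<Rightarrow> int \<Rightarrow> complex) \<Rightarrow> bool" where
  "poly3_in n d P \<longleftrightarrow> (\<exists>c. P = (\<lambda>k1 k2 k3. \<Sum>a\<le>n. \<Sum>b\<le>d. \<Sum>e\<le>n.
      c a b e * of_int k1 ^ a * of_int k2 ^ b * of_int k3 ^ e))"

lemma poly3_deg2_le_if_poly3_in: "poly3_in n d P \<Longrightarrow> poly3_deg2_le P d"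
  unfolding poly3_in_def poly3_deg2_le_def by auto

lemma poly3_in_zero: "poly3_in n d (\<lambda>k1 k2 k3. 0)"
  unfolding poly3_in_def by (rule exI[of _ "\<lambda>a b e. 0"]) simp

lemma poly3_in_add:
  assumes "poly3_in n d P" "poly3_in n d Q"
  shows "poly3_in n d (\<lambda>k1 k2 k3. P k1 k2 k3 + Q k1 k2 k3)"
proof -
  obtain c c' where
    "P = (\<lambda>k1 k2 k3. \<Sum>a\<le>n. \<Sum>b\<le>d. \<Sum>e\<le>n. c a b e * of_int k1 ^ a * of_int k2 ^ b * of_int k3 ^ e)"
    "Q = (\<lambda>k1 k2 k3. \<Sum>a\<le>n. \<Sum>b\<le>d. \<Sum>e\<le>n. c' a b e * of_int k1 ^ a * of_int k2 ^ b * of_int k3 ^ e)"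
    using assms unfolding poly3_in_def by blast
  then show ?thesis unfolding poly3_in_def
    by (intro exI[of _ "\<lambda>a b e. c a b e + c' a b e"]) (auto simp: sum.distrib[symmetric] algebra_simps)
qed

lemma poly3_in_sum:
  "finite I \<Longrightarrow> (\<And>k. k \<in> I \<Longrightarrow> poly3_in n d (F k)) \<Longrightarrow> poly3_in n d (\<lambda>k1 k2 k3. \<Sum>k\<in>I. F k k1 k2 k3)"
proof (induction I rule: finite_induct)
  case empty
  then show ?case by (simp add: poly3_in_zero)
next
  case (insert a I)
  then show ?case using poly3_in_add[of n d "F a" "\<lambda>k1 k2 k3. \<Sum>k\<in>I. F k k1 k2 k3"] by simp
qed

lemma poly3_in_tensor:
  assumes "poly1_deg_le n p" "poly1_deg_le d q" "poly1_deg_le n r"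
  shows "poly3_in n d (\<lambda>k1 k2 k3. p (of_int k1) * q (of_int k2) * r (of_int k3))"
proof -
  obtain a1 a2 a3 where "p = (\<lambda>x. \<Sum>k\<le>n. a1 k * x ^ k)" "q = (\<lambda>x. \<Sum>k\<le>d. a2 k * x ^ k)"
    "r = (\<lambda>x. \<Sum>k\<le>n. a3 k * x ^ k)"
    using assms unfolding poly1_deg_le_def by blast
  moreover have "(\<Sum>a\<le>n. a1 a * x ^ a) * (\<Sum>b\<le>d. a2 b * y ^ b) * (\<Sum>e\<le>n. a3 e * z ^ e)
      = (\<Sum>a\<le>n. \<Sum>b\<le>d. \<Sum>e\<le>n. (a1 a * a2 b * a3 e) * x ^ a * y ^ b * z ^ e)" for x y z :: complex
    by (simp add: sum_distrib_left sum_distrib_right mult_ac) (rule sum.swap)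
  ultimately show ?thesis
    unfolding poly3_in_def by (intro exI[of _ "\<lambda>a b e. a1 a * a2 b * a3 e"]) simp
qed

lemma poly3_in_diff:
  assumes "poly3_in n d P" "poly3_in n d Q"
  shows "poly3_in n d (\<lambda>k1 k2 k3. P k1 k2 k3 - Q k1 k2 k3)"
proof -
  obtain c where
    "Q = (\<lambda>k1 k2 k3. \<Sum>a\<le>n. \<Sum>b\<le>d. \<Sum>e\<le>n. c a b e * of_int k1 ^ a * of_int k2 ^ b * of_int k3 ^ e)"
    using assms(2) unfolding poly3_in_def by blast
  then have "poly3_in n d (\<lambda>k1 k2 k3. - Q k1 k2 k3)"
    unfolding poly3_in_def by (intro exI[of _ "\<lambda>a b e. - c a b e"]) (simp add: sum_negf)
  then show ?thesis
    using poly3_in_add[OF assms(1), of "\<lambda>k1 k2 k3. - Q k1 k2 k3"] by simp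
qed

lemma poly3_in_eval_23:
  assumes "poly2_in S f" "finite S" "\<And>i j. (i,j) \<in> S \<Longrightarrow> i \<le> d \<and> j \<le> n"
  shows "poly3_in n d (\<lambda>k1 k2 k3. f (of_int k2) (of_int k3))"
proof -
  obtain c where "f = (\<lambda>x y. \<Sum>(i,j)\<in>S. c i j * x ^ i * y ^ j)"
    using assms(1) by (rule poly2_inE)
  then have "(\<lambda>k1 k2 k3. f (of_int k2) (of_int k3)) = (\<lambda>k1 k2 k3. \<Sum>p\<in>S.
      (\<lambda>x. 1) (of_int k1) * (\<lambda>x. c (fst p) (snd p) * x ^ fst p) (of_int k2) * (\<lambda>x. 1 * x ^ snd p) (of_int k3))"
    by (simp add: case_prod_beta mult_ac)
  then show ?thesis
    by (simp only:) (intro poly3_in_sum poly3_in_tensor poly1_deg_le_const poly1_deg_le_monom assms(2);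
      use assms(3) in force)
qed

lemma poly3_in_eval_13:
  assumes "poly2_in S f" "finite S" "\<And>i j. (i,j) \<in> S \<Longrightarrow> i \<le> n \<and> j \<le> n"
  shows "poly3_in n d (\<lambda>k1 k2 k3. f (of_int k1) (of_int k3))"
proof -
  obtain c where "f = (\<lambda>x y. \<Sum>(i,j)\<in>S. c i j * x ^ i * y ^ j)"
    using assms(1) by (rule poly2_inE)
  then have "(\<lambda>k1 k2 k3. f (of_int k1) (of_int k3)) = (\<lambda>k1 k2 k3. \<Sum>p\<in>S.
      (\<lambda>x. c (fst p) (snd p) * x ^ fst p) (of_int k1) * (\<lambda>x. 1) (of_int k2) * (\<lambda>x. 1 * x ^ snd p) (of_int k3))"
    by (simp add: case_prod_beta mult_ac)
  then show ?thesis
    by (simp only:) (intro poly3_in_sum poly3_in_tensor poly1_deg_le_const poly1_deg_le_monom assms(2);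
      use assms(3) in force)
qed

lemma poly3_in_eval_12:
  assumes "poly2_in S f" "finite S" "\<And>i j. (i,j) \<in> S \<Longrightarrow> i \<le> n \<and> j \<le> d"
  shows "poly3_in n d (\<lambda>k1 k2 k3. f (of_int k1) (of_int k2))"
proof -
  obtain c where "f = (\<lambda>x y. \<Sum>(i,j)\<in>S. c i j * x ^ i * y ^ j)"
    using assms(1) by (rule poly2_inE)
  then have "(\<lambda>k1 k2 k3. f (of_int k1) (of_int k2)) = (\<lambda>k1 k2 k3. \<Sum>p\<in>S.
      (\<lambda>x. c (fst p) (snd p) * x ^ fst p) (of_int k1) * (\<lambda>x. 1 * x ^ snd p) (of_int k2) * (\<lambda>x. 1) (of_int k3))"
    by (simp add: case_prod_beta mult_ac)
  then show ?thesis
    by (simp only:) (intro poly3_in_sum poly3_in_tensor poly1_deg_le_const poly1_deg_le_monom assms(2);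
      use assms(3) in force)
qed

lemma poly3_in_eval_2:
  assumes "poly1_deg_le d p"
  shows "poly3_in n d (\<lambda>k1 k2 k3. p (of_int k2))"
  using poly3_in_tensor[OF poly1_deg_le_const[of n 1] assms poly1_deg_le_const[of n 1]] by simp

section \<open>The double sum\<close>

lemma sum_int_telescope:
  fixes F f :: "int \<Rightarrow> complex"
  assumes "\<And>i. F (i + 1) - F i = f i" "a - 1 \<le> b"
  shows "(\<Sum>i=a..b. f i) = F (b + 1) - F a"
  using assms(2)
proof (induction b rule: int_ge_induct)
  case base
  then show ?case by simp
next
  case (step i)
  have "{a..1 + i} = insert (1 + i) {a..i}"
    using step.hyps by (intro atLeastAtMostPlus1_int_conv) simp
  then have "(\<Sum>k=a..i + 1. f k) = f (i + 1) + (\<Sum>k=a..i. f k)"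
    by (simp add: add.commute)
  also have "\<dots> = F (i + 1 + 1) - F a"
    unfolding assms(1)[of "i + 1", symmetric] step.IH by simp
  finally show ?case .
qed

lemma isum_telescope:
  fixes F f :: "int \<Rightarrow> complex"
  assumes "\<And>i. F (i + 1) - F i = f i"
  shows "isum f a b = F (b + 1) - F a"
proof (cases "a \<le> b")
  case True
  then show ?thesis
    using sum_int_telescope[of F f a b] assms by (simp add: isum_def)
next
  case False
  then have "(\<Sum>i=b+1..a-1. f i) = F (a - 1 + 1) - F (b + 1)"
    using assms by (intro sum_int_telescope) simp_all
  then show ?thesis
    using False by (simp add: isum_def)
qed

lemma double_isum_eq:
  assumes "D1 (D2 \<Phi>) = A"
  shows "isum (\<lambda>l1. isum (\<lambda>l2. A (of_int l1) (of_int l2)) k2 k3) k1 k2 - A (of_int k2) (of_int k2)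
    = E1 (E2 \<Phi>) (of_int k2) (of_int k3) - E2 \<Phi> (of_int k1) (of_int k3) + \<Phi> (of_int k1) (of_int k2)
      - V12 \<Phi> (of_int k2 + 1) (of_int k2)"
proof -
  have "A = D2 (D1 \<Phi>)"
    using assms by (simp add: D2_D1_commute)
  then have inner: "isum (\<lambda>l2. A (of_int l1) (of_int l2)) k2 k3
      = D1 \<Phi> (of_int l1) (of_int (k3 + 1)) - D1 \<Phi> (of_int l1) (of_int k2)" for l1
    by (intro isum_telescope) (simp add: D2_def E2_def)
  have outer: "isum (\<lambda>l1. D1 \<Phi> (of_int l1) (of_int (k3 + 1)) - D1 \<Phi> (of_int l1) (of_int k2)) k1 k2
      = (\<Phi> (of_int (k2 + 1)) (of_int (k3 + 1)) - \<Phi> (of_int (k2 + 1)) (of_int k2))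
        - (\<Phi> (of_int k1) (of_int (k3 + 1)) - \<Phi> (of_int k1) (of_int k2))"
    by (rule isum_telescope) (simp add: D1_def E1_def)
  show ?thesis
    unfolding inner outer V12_subdiag assms by (simp add: E1_def E2_def)
qed

lemma poly3_deg2_le_double_isum:
  assumes "poly2_in (box (Suc R)) \<Phi>" "D1 (D2 \<Phi>) = A"
    and "R + 1 \<le> d" "poly1_deg_le d (\<lambda>k. V12 \<Phi> (k + 1) k)"
  shows "poly3_deg2_le (\<lambda>k1 k2 k3. isum (\<lambda>l1. isum (\<lambda>l2. A (of_int l1) (of_int l2)) k2 k3) k1 k2
    - A (of_int k2) (of_int k2)) d"
proof -
  have box: "\<And>i j. (i,j) \<in> box (Suc R) \<Longrightarrow> i \<le> Suc R \<and> j \<le> Suc R"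
    unfolding box_def by auto
  have E2: "poly2_in (box (Suc R)) (E2 \<Phi>)"
    using assms(1) finite_box down_closed_box by (rule poly2_in_E2)
  then have E1_E2: "poly2_in (box (Suc R)) (E1 (E2 \<Phi>))"
    using finite_box down_closed_box by (rule poly2_in_E1)
  have "poly3_in (Suc R) d (\<lambda>k1 k2 k3. E1 (E2 \<Phi>) (of_int k2) (of_int k3) - E2 \<Phi> (of_int k1) (of_int k3)
      + \<Phi> (of_int k1) (of_int k2) - V12 \<Phi> (of_int k2 + 1) (of_int k2))"
  proof (intro poly3_in_diff poly3_in_add)
    show "poly3_in (Suc R) d (\<lambda>k1 k2 k3. E1 (E2 \<Phi>) (of_int k2) (of_int k3))"
      by (rule poly3_in_eval_23[OF E1_E2 finite_box]) (use box assms(3) in force)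
    show "poly3_in (Suc R) d (\<lambda>k1 k2 k3. E2 \<Phi> (of_int k1) (of_int k3))"
      by (rule poly3_in_eval_13[OF E2 finite_box]) (use box in force)
    show "poly3_in (Suc R) d (\<lambda>k1 k2 k3. \<Phi> (of_int k1) (of_int k2))"
      by (rule poly3_in_eval_12[OF assms(1) finite_box]) (use box assms(3) in force)
    show "poly3_in (Suc R) d (\<lambda>k1 k2 k3. V12 \<Phi> (of_int k2 + 1) (of_int k2))"
      using poly3_in_eval_2[OF assms(4)] .
  qed
  then show ?thesis
    unfolding double_isum_eq[OF assms(2)] by (rule poly3_deg2_le_if_poly3_in)
qed

theorem lemma2:
  fixes A :: fun2 and R :: nat
  assumes "deg_each_le A R"
    and "total_deg_le (Top A) R"
  shows "poly3_deg2_le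
           (\<lambda>k1 k2 k3. isum (\<lambda>l1. isum (\<lambda>l2. A (of_int l1) (of_int l2)) k2 k3) k1 k2
                        - A (of_int k2) (of_int k2)) (R + 2)
       \<and> (Top A = (\<lambda>x y. 0) \<longrightarrow> poly3_deg2_le
           (\<lambda>k1 k2 k3. isum (\<lambda>l1. isum (\<lambda>l2. A (of_int l1) (of_int l2)) k2 k3) k1 k2
                        - A (of_int k2) (of_int k2)) (R + 1))"
proof -
  obtain \<Phi> where \<Phi>: "poly2_in (box (Suc R)) \<Phi>" "D1 (D2 \<Phi>) = A"
    using poly2_antidifference[OF _ finite_box finite_box down_closed_box Suc_Suc_mem_box] assms(1)
    unfolding deg_each_le_iff_poly2_in_box by blast
  obtain \<psi> where \<psi>: "poly2_in (box (Suc R)) \<psi>" "Vsum \<psi> = V12 \<Phi>"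
    using Vsum_onto_poly2_in[OF finite_box down_closed_box poly2_in_box_V12[OF \<Phi>(1)]] by blast
  define w where "w = (\<lambda>x y. \<psi> x y + sigma \<psi> x y)"
  have T: "Top A = D1 (D2 w)"
    unfolding w_def by (rule Top_eq_D1_D2[OF \<psi> \<Phi>(2)])
  then have T_deg: "poly2_in (triangle R) (D1 (D2 w))"
    using assms(2) by (simp add: total_deg_le_iff_poly2_in_triangle)
  obtain w0 where w0: "poly2_in (triangle (R + 2)) w0" "D1 (D2 w0) = D1 (D2 w)"
    using poly2_antidifference[OF T_deg finite_triangle finite_triangle down_closed_triangle
        Suc_Suc_mem_triangle] by blast
  have "poly2_in (box (R + 2)) \<psi>"
    by (rule poly2_in_subset[OF \<psi>(1) box_mono finite_box]) simp
  then have "poly1_deg_le (R + 2) (\<lambda>k. V12 \<Phi> (k + 1) k)"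
    using poly1_deg_le_Vsum_subdiag[OF _ w_def w0 T_deg] \<psi>(2) by simp
  moreover have "poly1_deg_le (R + 1) (\<lambda>k. V12 \<Phi> (k + 1) k)" if "Top A = (\<lambda>x y. 0)"
  proof -
    have "D1 (D2 (\<lambda>x y. 0)) = D1 (D2 w)"
      using that T D1_D2_zero by simp
    then show ?thesis
      using poly1_deg_le_Vsum_subdiag[OF \<psi>(1) w_def poly2_in_zero _ T_deg] \<psi>(2) by simp
  qed
  ultimately show ?thesis
    using poly3_deg2_le_double_isum[OF \<Phi>] by simp
qed

end
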